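(* Let $\Gamma\subset U_+$ be a non-commutative, torsion-free complex Kleinian group and let $\Gamma_p$ be the subgroup of $\Gamma$ generated by all parabolic elements of $\Gamma$. Suppose $\Gamma_p$ is conjugate in $\mathrm{PSL}(3,\mathbb{C})$ to a group $$\Gamma_{\mathbf{w}}=\left\langle g_{1,0},\ g_{c,d},\ \begin{bmatrix}1&x&y\\0&1&1\\0&0&1\end{bmatrix}\right\rangle,\qquad g_{s,t}=\begin{bmatrix}1&s&t\\0&1&0\\0&0&1\end{bmatrix},$$ where $\mathbf{w}=(x,y,p,q,r)$ with $x,y\in\mathbb{C}$, $p,q,r\in\mathbb{Z}$, $p,q$ coprime, $q^2$ divides $r$, $c=pq^{-1}$ and $d=r^{-1}$. If $\mathrm{rank}(\Gamma_{\mathbf{w}})=3$, then $\Gamma$ contains no loxodromic elements.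
   Context: $U_+\subset\mathrm{PSL}(3,\mathbb{C})$ is the subgroup of elements admitting an upper triangular lift in $\mathrm{SL}(3,\mathbb{C})$. A complex Kleinian group is a discrete subgroup of $\mathrm{PSL}(3,\mathbb{C})$ acting properly discontinuously on some nonempty open invariant subset of $\mathbb{CP}^2$. An element of $\mathrm{PSL}(3,\mathbb{C})$ is parabolic if it has a non-diagonalizable lift in $\mathrm{SL}(3,\mathbb{C})$ all of whose eigenvalues have modulus $1$, and loxodromic if it has a lift in $\mathrm{SL}(3,\mathbb{C})$ with an eigenvalue of modulus different from $1$. Torsion-free means the only element of finite order is the identity. The rank of a finitely generated group is its minimal number of generators. *)

theory Defs
  imports "HOL-Analysis.Analysis"
begin

text \<open>A subgroup of PSL(3,C) is represented by its full preimage in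
SL(3,C), i.e. a subgroup of SL(3,C) containing the centre
{w I : w^3 = 1}. An element of PSL(3,C) is represented by any of its lifts.\<close>

type_synonym mat3 = "complex^3^3"

definition SL3 :: "mat3 set" where
  "SL3 = {A. det A = 1}"

definition centre3 :: "mat3 set" where
  "centre3 = {mat w | w. w ^ 3 = (1::complex)}"

definition is_subgroup3 :: "mat3 set \<Rightarrow> bool" where
  "is_subgroup3 H \<longleftrightarrow> H \<subseteq> SL3 \<and> mat 1 \<in> H \<and>
     (\<forall>g\<in>H. \<forall>h\<in>H. g ** h \<in> H) \<and> (\<forall>g\<in>H. matrix_inv g \<in> H)"

definition psl_subgroup :: "mat3 set \<Rightarrow> bool" where
  "psl_subgroup G \<longleftrightarrow> is_subgroup3 G \<and> centre3 \<subseteq> G"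

definition gen3 :: "mat3 set \<Rightarrow> mat3 set" where
  "gen3 S = \<Inter>{H. is_subgroup3 H \<and> S \<subseteq> H}"

definition psl_gen :: "mat3 set \<Rightarrow> mat3 set" where
  "psl_gen S = gen3 (centre3 \<union> S)"

definition psl_rank :: "mat3 set \<Rightarrow> nat" where
  "psl_rank G = (LEAST n. \<exists>gs. length gs = n \<and> set gs \<subseteq> SL3 \<and> psl_gen (set gs) = G)"

definition upper_tri :: "mat3 \<Rightarrow> bool" where
  "upper_tri A \<longleftrightarrow> (\<forall>i j. j < i \<longrightarrow> A $ i $ j = 0)"

definition in_Uplus :: "mat3 \<Rightarrow> bool" where
  "in_Uplus A \<longleftrightarrow> A \<in> SL3 \<and> (\<exists>w. w ^ 3 = (1::complex) \<and> upper_tri (mat w ** A))"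

definition diagonal_mat :: "mat3 \<Rightarrow> bool" where
  "diagonal_mat D \<longleftrightarrow> (\<forall>i j. i \<noteq> j \<longrightarrow> D $ i $ j = 0)"

definition diagonalizable :: "mat3 \<Rightarrow> bool" where
  "diagonalizable A \<longleftrightarrow> (\<exists>P D. invertible P \<and> diagonal_mat D \<and> A = P ** D ** matrix_inv P)"

definition is_eigenvalue :: "mat3 \<Rightarrow> complex \<Rightarrow> bool" where
  "is_eigenvalue A l \<longleftrightarrow> (\<exists>v. v \<noteq> 0 \<and> A *v v = l *s v)"

definition parabolic :: "mat3 \<Rightarrow> bool" where
  "parabolic A \<longleftrightarrow> (\<exists>w. w ^ 3 = (1::complex) \<and>
     \<not> diagonalizable (mat w ** A) \<and> (\<forall>l. is_eigenvalue (mat w ** A) l \<longrightarrow> cmod l = 1))"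

definition loxodromic :: "mat3 \<Rightarrow> bool" where
  "loxodromic A \<longleftrightarrow> (\<exists>w. w ^ 3 = (1::complex) \<and>
     (\<exists>l. is_eigenvalue (mat w ** A) l \<and> cmod l \<noteq> 1))"

definition torsion_free :: "mat3 set \<Rightarrow> bool" where
  "torsion_free G \<longleftrightarrow> (\<forall>g\<in>G. \<forall>n::nat. n > 0 \<longrightarrow> ((\<lambda>M. g ** M) ^^ n) (mat 1) \<in> centre3 \<longrightarrow> g \<in> centre3)"

definition non_commutative :: "mat3 set \<Rightarrow> bool" where
  "non_commutative G \<longleftrightarrow> (\<exists>g\<in>G. \<exists>h\<in>G. \<not> (\<exists>z\<in>centre3. g ** h = z ** (h ** g)))"

definition discrete_set :: "mat3 set \<Rightarrow> bool" where
  "discrete_set G \<longleftrightarrow> (\<forall>g\<in>G. \<exists>e>0. \<forall>h\<in>G. dist h g < e \<longrightarrow> h = g)"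

text \<open>Subsets of CP^2 are represented by cones of nonzero vectors in C^3.\<close>
definition proj_cone :: "(complex^3) set \<Rightarrow> bool" where
  "proj_cone U \<longleftrightarrow> 0 \<notin> U \<and> (\<forall>v\<in>U. \<forall>c. c \<noteq> 0 \<longrightarrow> c *s v \<in> U)"

definition acts_prop_disc :: "mat3 set \<Rightarrow> (complex^3) set \<Rightarrow> bool" where
  "acts_prop_disc G U \<longleftrightarrow> (\<forall>K. compact K \<and> K \<subseteq> U \<longrightarrow>
     finite {g\<in>G. \<exists>v\<in>K. \<exists>u\<in>K. \<exists>c. c \<noteq> 0 \<and> g *v v = c *s u})"

definition complex_kleinian :: "mat3 set \<Rightarrow> bool" where
  "complex_kleinian G \<longleftrightarrow> psl_subgroup G \<and> discrete_set G \<and>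
     (\<exists>U. open U \<and> U \<noteq> {} \<and> proj_cone U \<and> (\<forall>g\<in>G. (\<lambda>v. g *v v) ` U = U)
          \<and> acts_prop_disc G U)"

definition gst :: "complex \<Rightarrow> complex \<Rightarrow> mat3" where
  "gst s t = vector [vector [1, s, t], vector [0, 1, 0], vector [0, 0, 1]]"

definition hxy :: "complex \<Rightarrow> complex \<Rightarrow> mat3" where
  "hxy x y = vector [vector [1, x, y], vector [0, 1, 1], vector [0, 0, 1]]"

definition Gamma_w :: "complex \<Rightarrow> complex \<Rightarrow> int \<Rightarrow> int \<Rightarrow> int \<Rightarrow> mat3 set" where
  "Gamma_w x y p q r = psl_gen {gst 1 0, gst (of_int p / of_int q) (1 / of_int r), hxy x y}"

definition parabolic_subgroup :: "mat3 set \<Rightarrow> mat3 set" where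
  "parabolic_subgroup G = psl_gen {g\<in>G. parabolic g}"

definition psl_conjugate :: "mat3 set \<Rightarrow> mat3 set \<Rightarrow> bool" where
  "psl_conjugate A B \<longleftrightarrow> (\<exists>P\<in>SL3. A = (\<lambda>g. P ** g ** matrix_inv P) ` B)"

end

theory Submission
  imports Defs
begin

text \<open>
  The conjugates of g_{1,0} and h = [1 x y; 0 1 1; 0 0 1] lie in Gamma and are upper
  triangular, hence unipotent elements u, u' of Gamma that do not commute; since
  (g_{1,0} - 1)^2 = 0, the two superdiagonal entries of u have product zero. Conjugation by an
  element g of Gamma with diagonal (a0, a1, a2) multiplies the central commutator [u, u'] by
  a0/a2 and the superdiagonal entries of u' by a0/a1 and a1/a2, and commutators with u turn the
  latter into central elements as well. If one of these ratios had modulus different from 1,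
  powers of g or of its inverse would produce nontrivial central elements of Gamma converging to
  the identity, contradicting discreteness. So |a0| = |a1| = |a2|, and a0 a1 a2 = 1 puts every
  eigenvalue of g on the unit circle.
\<close>

section \<open>Conjugation of square matrices\<close>

lemma matrix_inv_unique:
  fixes A B :: "'a::semiring_1^'n^'n"
  assumes "A ** B = mat 1" "B ** A = mat 1"
  shows "matrix_inv A = B"
  unfolding matrix_inv_def
proof (rule some_equality)
  fix B' assume "A ** B' = mat 1 \<and> B' ** A = mat 1"
  then show "B' = B"
    using assms by (metis matrix_mul_assoc matrix_mul_lid matrix_mul_rid)
qed (use assms in simp)

lemma matrix_inv_left: "invertible A \<Longrightarrow> matrix_inv A ** A = mat 1"
  unfolding invertible_def matrix_inv_def by (rule someI2_ex) auto

lemma matrix_inv_right: "invertible A \<Longrightarrow> A ** matrix_inv A = mat 1"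
  unfolding invertible_def matrix_inv_def by (rule someI2_ex) auto

lemma matrix_diff_ldistrib: "(A::'a::ring_1^'n^'m) ** (B - C) = A ** B - A ** C"
  by (simp add: vec_eq_iff matrix_matrix_mult_def sum_subtractf algebra_simps)

lemma matrix_diff_rdistrib: "((B::'a::ring_1^'n^'m) - C) ** A = B ** A - C ** A"
  by (simp add: vec_eq_iff matrix_matrix_mult_def sum_subtractf algebra_simps)

lemma mat_mult_nth: "(mat w ** A) $ i $ j = w * A $ i $ j"
  by (simp add: matrix_matrix_mult_def mat_def if_distrib if_distribR sum.delta cong: if_cong)

lemma mat_mult_vector: "mat w *v v = w *s v"
  by (simp add: matrix_vector_mult_def mat_def vec_eq_iff if_distrib if_distribR sum.delta cong: if_cong)

definition matrix_conj :: "'a::semiring_1^'n^'n \<Rightarrow> 'a^'n^'n \<Rightarrow> 'a^'n^'n" where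
  "matrix_conj B X = B ** X ** matrix_inv B"

lemma matrix_conj_mult:
  "invertible P \<Longrightarrow> matrix_conj P (X ** Y) = matrix_conj P X ** matrix_conj P Y"
  unfolding matrix_conj_def by (metis matrix_inv_left matrix_mul_assoc matrix_mul_rid)

lemma matrix_conj_diff_one:
  fixes P :: "'a::ring_1^'n^'n"
  assumes "invertible P"
  shows "matrix_conj P (X - mat 1) = matrix_conj P X - mat 1"
  using assms by (simp add: matrix_conj_def matrix_diff_ldistrib matrix_diff_rdistrib matrix_inv_right)

lemma matrix_conj_zero: "matrix_conj P 0 = 0"
  by (simp add: matrix_conj_def)

lemma inj_matrix_conj: "invertible P \<Longrightarrow> inj (matrix_conj P)"
  unfolding matrix_conj_def
  by (rule inj_on_inverseI[where g = "\<lambda>Y. matrix_inv P ** Y ** P"])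
    (metis matrix_inv_left matrix_mul_assoc matrix_mul_lid matrix_mul_rid)

section \<open>Upper triangular 3 by 3 matrices\<close>

lemma three_cases: "(i::3) = 0 \<or> i = 1 \<or> i = 2"
  using exhaust_3[of i] by auto

lemma three_eq_zero: "(3::3) = 0"
  by simp

lemma all_3: "(\<forall>i::3. P i) \<longleftrightarrow> P 0 \<and> P 1 \<and> P 2"
  using three_cases by metis

lemma less_3_iff: "(j::3) < i \<longleftrightarrow> (i = 1 \<and> j = 0) \<or> (i = 2 \<and> j = 0) \<or> (i = 2 \<and> j = 1)"
proof -
  have "(0::3) < 1" "(1::3) < 2" "(0::3) < 2"
    by (simp_all add: less_bit1_def bit1.Rep_0 bit1.Rep_1 bit1.Rep_numeral)
  then show ?thesis
    using three_cases[of i] three_cases[of j] by (elim disjE) auto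
qed

lemma sum_UNIV_3: "sum f (UNIV::3 set) = f 0 + f 1 + f 2"
  using sum_3[of f] unfolding three_eq_zero by (simp only: add_ac)

lemma prod_UNIV_3: "prod f (UNIV::3 set) = f 0 * f 1 * f 2"
  unfolding UNIV_3 three_eq_zero by (simp add: ac_simps)

lemma matrix_mult_nth_3:
  "((A::mat3) ** B) $ i $ j = A$i$0 * B$0$j + A$i$1 * B$1$j + A$i$2 * B$2$j"
  by (simp add: matrix_matrix_mult_def sum_UNIV_3)

lemma upper_tri_iff: "upper_tri A \<longleftrightarrow> A$1$0 = 0 \<and> A$2$0 = 0 \<and> A$2$1 = 0"
  unfolding upper_tri_def less_3_iff by auto

definition upper3 :: "complex \<Rightarrow> complex \<Rightarrow> complex \<Rightarrow> complex \<Rightarrow> complex \<Rightarrow> complex \<Rightarrow> mat3" where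
  "upper3 a b c d e f = (\<chi> i j. if i = 0 \<and> j = 0 then a else if i = 1 \<and> j = 1 then b
     else if i = 2 \<and> j = 2 then c else if i = 0 \<and> j = 1 then d
     else if i = 1 \<and> j = 2 then e else if i = 0 \<and> j = 2 then f else 0)"

lemma upper3_nth [simp]:
  "upper3 a b c d e f $0$0 = a" "upper3 a b c d e f $1$1 = b" "upper3 a b c d e f $2$2 = c"
  "upper3 a b c d e f $0$1 = d" "upper3 a b c d e f $1$2 = e" "upper3 a b c d e f $0$2 = f"
  "upper3 a b c d e f $1$0 = 0" "upper3 a b c d e f $2$0 = 0" "upper3 a b c d e f $2$1 = 0"
  by (simp_all add: upper3_def)

lemma upper3_eq_iff:
  "upper3 a b c d e f = upper3 a' b' c' d' e' f' \<longleftrightarrow>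
     a = a' \<and> b = b' \<and> c = c' \<and> d = d' \<and> e = e' \<and> f = f'"
  by (auto simp: vec_eq_iff all_3)

lemma upper_tri_upper3: "upper_tri (upper3 a b c d e f)"
  by (simp add: upper_tri_iff)

lemma upper3_of_upper_tri:
  "upper_tri A \<Longrightarrow> A = upper3 (A$0$0) (A$1$1) (A$2$2) (A$0$1) (A$1$2) (A$0$2)"
  by (simp add: upper_tri_iff vec_eq_iff all_3)

lemma upper3_zero: "upper3 0 0 0 0 0 0 = 0"
  by (simp add: vec_eq_iff all_3)

lemma mat_1_eq_upper3: "mat 1 = upper3 1 1 1 0 0 0"
  by (simp add: vec_eq_iff all_3 mat_def)

lemma upper3_mult:
  "upper3 a b c d e f ** upper3 a' b' c' d' e' f' =
     upper3 (a*a') (b*b') (c*c') (a*d' + d*b') (b*e' + e*c') (a*f' + d*e' + f*c')"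
  by (simp add: vec_eq_iff all_3 matrix_mult_nth_3)

lemma upper3_diff:
  "upper3 a b c d e f - upper3 a' b' c' d' e' f' = upper3 (a-a') (b-b') (c-c') (d-d') (e-e') (f-f')"
  by (simp add: vec_eq_iff all_3)

lemma det_upper3: "det (upper3 a b c d e f) = a * b * c"
  using upper_tri_upper3[of a b c d e f] unfolding upper_tri_def
  by (subst det_upperdiagonal) (simp_all add: prod_UNIV_3)

lemma matrix_inv_upper3:
  assumes "a \<noteq> 0" "b \<noteq> 0" "c \<noteq> 0"
  shows "matrix_inv (upper3 a b c d e f) =
    upper3 (1/a) (1/b) (1/c) (-d/(a*b)) (-e/(b*c)) ((d*e - f*b)/(a*b*c))"
  using assms
  by (intro matrix_inv_unique) (simp_all add: upper3_mult mat_1_eq_upper3 upper3_eq_iff field_simps)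

lemma upper3_commutator:
  "upper3 1 1 1 a b c ** upper3 1 1 1 a' b' c' ** matrix_inv (upper3 1 1 1 a b c)
     ** matrix_inv (upper3 1 1 1 a' b' c') = upper3 1 1 1 0 0 (a*b' - a'*b)"
  by (simp add: matrix_inv_upper3 upper3_mult upper3_eq_iff algebra_simps)

lemma upper3_unipotent_of_nilpotent:
  assumes "upper_tri A" "(A - mat 1) ** (A - mat 1) ** (A - mat 1) = 0"
  shows "\<exists>\<alpha> \<beta> \<gamma>. A = upper3 1 1 1 \<alpha> \<beta> \<gamma>"
proof -
  obtain a b c d e f where A: "A = upper3 a b c d e f"
    using upper3_of_upper_tri[OF assms(1)] by blast
  from assms(2) have "a = 1 \<and> b = 1 \<and> c = 1"
    unfolding A mat_1_eq_upper3 upper3_diff upper3_mult upper3_zero[symmetric] upper3_eq_iff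
    by simp
  then show ?thesis
    unfolding A by blast
qed

lemma upper3_unipotent_square:
  "(upper3 1 1 1 \<alpha> \<beta> \<gamma> - mat 1) ** (upper3 1 1 1 \<alpha> \<beta> \<gamma> - mat 1) = upper3 0 0 0 0 0 (\<alpha> * \<beta>)"
  by (simp add: mat_1_eq_upper3 upper3_diff upper3_mult)

lemma upper3_unipotent_commute_iff:
  "upper3 1 1 1 \<alpha> \<beta> \<gamma> ** upper3 1 1 1 \<alpha>' \<beta>' \<gamma>' = upper3 1 1 1 \<alpha>' \<beta>' \<gamma>' ** upper3 1 1 1 \<alpha> \<beta> \<gamma>
    \<longleftrightarrow> \<alpha> * \<beta>' = \<alpha>' * \<beta>"
  by (auto simp: upper3_mult upper3_eq_iff algebra_simps)

lemma matrix_conj_upper3_unipotent: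
  assumes "b0 \<noteq> 0" "b1 \<noteq> 0" "b2 \<noteq> 0"
  shows "matrix_conj (upper3 b0 b1 b2 p q s) (upper3 1 1 1 \<alpha> \<beta> \<gamma>) =
    upper3 1 1 1 (b0/b1*\<alpha>) (b1/b2*\<beta>) ((b0*b1*\<gamma> + b1*p*\<beta> - b0*q*\<alpha>) / (b1*b2))"
  using assms
  by (simp add: matrix_conj_def matrix_inv_upper3 upper3_mult upper3_eq_iff field_simps)

lemma matrix_conj_iterate_upper3_unipotent:
  assumes "b0 \<noteq> 0" "b1 \<noteq> 0" "b2 \<noteq> 0"
  shows "\<exists>\<gamma>'. (matrix_conj (upper3 b0 b1 b2 p q s) ^^ k) (upper3 1 1 1 \<alpha> \<beta> \<gamma>) =
    upper3 1 1 1 ((b0/b1)^k*\<alpha>) ((b1/b2)^k*\<beta>) \<gamma>'"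
proof (induction k)
  case (Suc k)
  then show ?case
    by (auto simp: matrix_conj_upper3_unipotent[OF assms] mult.assoc)
qed auto

lemma matrix_conj_iterate_upper3_central:
  assumes "b0 \<noteq> 0" "b1 \<noteq> 0" "b2 \<noteq> 0"
  shows "(matrix_conj (upper3 b0 b1 b2 p q s) ^^ k) (upper3 1 1 1 0 0 \<gamma>) =
    upper3 1 1 1 0 0 ((b0/b2)^k*\<gamma>)"
  by (induction k) (use assms in \<open>simp_all add: matrix_conj_upper3_unipotent field_simps\<close>)

lemma eigenvalue_upper_tri:
  assumes "upper_tri A" "is_eigenvalue A l"
  shows "\<exists>i. l = A $ i $ i"
proof -
  obtain v where "v \<noteq> 0" "A *v v = l *s v"
    using assms(2) unfolding is_eigenvalue_def by blast
  then have "\<not> invertible (A - mat l)"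
    unfolding invertible_left_inverse matrix_left_invertible_ker
    by (auto simp: matrix_vector_mult_diff_rdistrib mat_mult_vector)
  then have "det (A - mat l) = 0"
    by (simp add: invertible_det_nz)
  moreover have "det (A - mat l) = (\<Prod>i\<in>UNIV. A $ i $ i - l)"
    using assms(1) by (subst det_upperdiagonal) (auto simp: upper_tri_def mat_def)
  ultimately show ?thesis
    by auto
qed

lemma in_Uplus_imp_upper_tri:
  assumes "in_Uplus A"
  shows "upper_tri A"
proof -
  obtain w where "w ^ 3 = 1" "upper_tri (mat w ** A)"
    using assms unfolding in_Uplus_def by blast
  moreover from this have "w \<noteq> 0"
    by auto
  ultimately show ?thesis
    by (simp add: upper_tri_def mat_mult_nth)
qed

lemma not_loxodromic_if_unimodular_diag:
  assumes "upper_tri A" "\<forall>i. cmod (A $ i $ i) = 1"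
  shows "\<not> loxodromic A"
proof
  assume "loxodromic A"
  then obtain w l where w: "w ^ 3 = 1" and l: "is_eigenvalue (mat w ** A) l" "cmod l \<noteq> 1"
    unfolding loxodromic_def by blast
  have "cmod w ^ 3 = 1 ^ 3"
    using arg_cong[OF w, of cmod] by (simp add: norm_power)
  then have "cmod w = 1"
    by (rule power_eq_imp_eq_base) simp_all
  have "upper_tri (mat w ** A)"
    using assms(1) by (simp add: upper_tri_def mat_mult_nth)
  then obtain i where "l = w * A $ i $ i"
    using eigenvalue_upper_tri[OF _ l(1)] by (auto simp: mat_mult_nth)
  then show False
    using l(2) assms(2) \<open>cmod w = 1\<close> by (simp add: norm_mult)
qed

section \<open>Discrete groups of upper triangular matrices\<close>

lemma is_subgroup3_mult: "is_subgroup3 G \<Longrightarrow> g \<in> G \<Longrightarrow> h \<in> G \<Longrightarrow> g ** h \<in> G"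
  unfolding is_subgroup3_def by blast

lemma is_subgroup3_inv: "is_subgroup3 G \<Longrightarrow> g \<in> G \<Longrightarrow> matrix_inv g \<in> G"
  unfolding is_subgroup3_def by blast

lemma is_subgroup3_one: "is_subgroup3 G \<Longrightarrow> mat 1 \<in> G"
  unfolding is_subgroup3_def by blast

lemma is_subgroup3_det: "is_subgroup3 G \<Longrightarrow> g \<in> G \<Longrightarrow> det g = 1"
  unfolding is_subgroup3_def SL3_def by blast

lemma is_subgroup3_conj_iterate:
  assumes "is_subgroup3 G" "B \<in> G" "X \<in> G"
  shows "(matrix_conj B ^^ k) X \<in> G"
  by (induction k) (simp_all add: assms matrix_conj_def is_subgroup3_mult is_subgroup3_inv)

lemma is_subgroup3_commutator:
  "is_subgroup3 G \<Longrightarrow> X \<in> G \<Longrightarrow> Y \<in> G \<Longrightarrow> X ** Y ** matrix_inv X ** matrix_inv Y \<in> G"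
  by (simp add: is_subgroup3_mult is_subgroup3_inv)

lemma upper3_mem_det: "is_subgroup3 G \<Longrightarrow> upper3 a b c d e f \<in> G \<Longrightarrow> a * b * c = 1"
  using is_subgroup3_det det_upper3 by metis

lemma psl_gen_superset: "S \<subseteq> psl_gen S"
  unfolding psl_gen_def gen3_def by blast

lemma psl_gen_least: "psl_subgroup G \<Longrightarrow> S \<subseteq> G \<Longrightarrow> psl_gen S \<subseteq> G"
  unfolding psl_subgroup_def psl_gen_def gen3_def by blast

lemma dist_upper3_central: "dist (upper3 1 1 1 0 0 t) (mat 1) = cmod t"
  by (simp add: dist_norm mat_1_eq_upper3 upper3_diff norm_vec_def L2_set_def sum_UNIV_3)

lemma discrete_no_contracting_central:
  assumes "discrete_set G" "mat 1 \<in> G" "\<tau> \<noteq> 0" "\<rho> \<noteq> 0" "cmod \<rho> < 1"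
    and mem: "\<And>k. upper3 1 1 1 0 0 (\<rho>^k * \<tau>) \<in> G"
  shows False
proof -
  obtain e where "e > 0" and e: "\<And>h. h \<in> G \<Longrightarrow> dist h (mat 1) < e \<Longrightarrow> h = mat 1"
    using assms(1,2) unfolding discrete_set_def by blast
  obtain k where k: "cmod \<rho> ^ k < e / cmod \<tau>"
    using real_arch_pow_inv[of "e / cmod \<tau>" "cmod \<rho>"] \<open>e > 0\<close> assms(3,5) by auto
  have "dist (upper3 1 1 1 0 0 (\<rho>^k * \<tau>)) (mat 1) < e"
    using k assms(3) by (simp add: dist_upper3_central norm_mult norm_power field_simps)
  then have "upper3 1 1 1 0 0 (\<rho>^k * \<tau>) = mat 1"
    using e mem by blast
  then show False
    using assms(3,4) by (simp add: mat_1_eq_upper3 upper3_eq_iff)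
qed

lemma conj_iterate_commutator_mem:
  assumes G: "is_subgroup3 G" and B: "upper3 b0 b1 b2 p q s \<in> G"
    and u: "upper3 1 1 1 \<alpha> \<beta> \<gamma> \<in> G" and u': "upper3 1 1 1 \<alpha>' \<beta>' \<gamma>' \<in> G"
  shows "upper3 1 1 1 0 0 ((b0/b1)^k * \<alpha>' * \<beta> - \<alpha> * ((b1/b2)^k * \<beta>')) \<in> G"
proof -
  have "b0 \<noteq> 0" "b1 \<noteq> 0" "b2 \<noteq> 0"
    using upper3_mem_det[OF G B] by auto
  then obtain \<gamma>k where \<gamma>k: "(matrix_conj (upper3 b0 b1 b2 p q s) ^^ k) (upper3 1 1 1 \<alpha>' \<beta>' \<gamma>') =
      upper3 1 1 1 ((b0/b1)^k*\<alpha>') ((b1/b2)^k*\<beta>') \<gamma>k"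
    using matrix_conj_iterate_upper3_unipotent by blast
  have "upper3 1 1 1 ((b0/b1)^k*\<alpha>') ((b1/b2)^k*\<beta>') \<gamma>k \<in> G"
    using is_subgroup3_conj_iterate[OF G B u', of k] \<gamma>k by simp
  from is_subgroup3_commutator[OF G this u] show ?thesis
    by (simp add: upper3_commutator)
qed

lemma diag_ratio_02_ge_1:
  assumes G: "is_subgroup3 G" "discrete_set G"
    and z: "upper3 1 1 1 0 0 \<tau> \<in> G" "\<tau> \<noteq> 0" and B: "upper3 b0 b1 b2 p q s \<in> G"
  shows "1 \<le> cmod (b0/b2)"
proof (rule ccontr)
  assume "\<not> 1 \<le> cmod (b0/b2)"
  have nz: "b0 \<noteq> 0" "b1 \<noteq> 0" "b2 \<noteq> 0"
    using upper3_mem_det[OF G(1) B] by auto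
  show False
  proof (rule discrete_no_contracting_central[OF G(2) is_subgroup3_one[OF G(1)] z(2)])
    show "b0/b2 \<noteq> 0" "cmod (b0/b2) < 1"
      using nz \<open>\<not> 1 \<le> cmod (b0/b2)\<close> by auto
    show "upper3 1 1 1 0 0 ((b0/b2)^k * \<tau>) \<in> G" for k
      using is_subgroup3_conj_iterate[OF G(1) B z(1), of k]
      by (simp add: matrix_conj_iterate_upper3_central nz)
  qed
qed

lemma diag_ratio_12_ge_1:
  assumes G: "is_subgroup3 G" "discrete_set G"
    and u: "upper3 1 1 1 \<alpha> 0 \<gamma> \<in> G" "\<alpha> \<noteq> 0"
    and u': "upper3 1 1 1 \<alpha>' \<beta>' \<gamma>' \<in> G" "\<beta>' \<noteq> 0"
    and B: "upper3 b0 b1 b2 p q s \<in> G"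
  shows "1 \<le> cmod (b1/b2)"
proof (rule ccontr)
  assume "\<not> 1 \<le> cmod (b1/b2)"
  show False
  proof (rule discrete_no_contracting_central[OF G(2) is_subgroup3_one[OF G(1)]])
    show "- \<alpha> * \<beta>' \<noteq> 0" "b1/b2 \<noteq> 0" "cmod (b1/b2) < 1"
      using u(2) u'(2) upper3_mem_det[OF G(1) B] \<open>\<not> 1 \<le> cmod (b1/b2)\<close> by auto
    show "upper3 1 1 1 0 0 ((b1/b2)^k * (- \<alpha> * \<beta>')) \<in> G" for k
      using conj_iterate_commutator_mem[OF G(1) B u(1) u'(1), of k] by (simp add: algebra_simps)
  qed
qed

lemma diag_ratio_01_ge_1:
  assumes G: "is_subgroup3 G" "discrete_set G"
    and u: "upper3 1 1 1 0 \<beta> \<gamma> \<in> G" "\<beta> \<noteq> 0"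
    and u': "upper3 1 1 1 \<alpha>' \<beta>' \<gamma>' \<in> G" "\<alpha>' \<noteq> 0"
    and B: "upper3 b0 b1 b2 p q s \<in> G"
  shows "1 \<le> cmod (b0/b1)"
proof (rule ccontr)
  assume "\<not> 1 \<le> cmod (b0/b1)"
  show False
  proof (rule discrete_no_contracting_central[OF G(2) is_subgroup3_one[OF G(1)]])
    show "\<alpha>' * \<beta> \<noteq> 0" "b0/b1 \<noteq> 0" "cmod (b0/b1) < 1"
      using u(2) u'(2) upper3_mem_det[OF G(1) B] \<open>\<not> 1 \<le> cmod (b0/b1)\<close> by auto
    show "upper3 1 1 1 0 0 ((b0/b1)^k * (\<alpha>' * \<beta>)) \<in> G" for k
      using conj_iterate_commutator_mem[OF G(1) B u(1) u'(1), of k] by (simp add: algebra_simps)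
  qed
qed

lemma norm_eq_of_ratios_ge_1:
  fixes x y :: "'a::real_normed_field"
  assumes "1 \<le> norm (x/y)" "1 \<le> norm (y/x)"
  shows "norm x = norm y"
  using assms by (cases "x = 0 \<or> y = 0") (auto simp: norm_divide field_simps)

lemma unipotent_pair_imp_unimodular_diag:
  assumes G: "is_subgroup3 G" "discrete_set G"
    and u: "upper3 1 1 1 \<alpha> \<beta> \<gamma> \<in> G" and u': "upper3 1 1 1 \<alpha>' \<beta>' \<gamma>' \<in> G"
    and "\<alpha> * \<beta> = 0" and nc: "\<alpha> * \<beta>' \<noteq> \<alpha>' * \<beta>"
    and A: "upper3 a0 a1 a2 p q s \<in> G"
  shows "cmod a0 = 1 \<and> cmod a1 = 1 \<and> cmod a2 = 1"
proof -
  have det: "a0 * a1 * a2 = 1"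
    using upper3_mem_det[OF G(1) A] .
  then have "a0 \<noteq> 0" "a1 \<noteq> 0" "a2 \<noteq> 0"
    by auto
  then have A': "upper3 (1/a0) (1/a1) (1/a2) (-p/(a0*a1)) (-q/(a1*a2)) ((p*q - s*a1)/(a0*a1*a2)) \<in> G"
    using is_subgroup3_inv[OF G(1) A] by (simp add: matrix_inv_upper3)
  have "upper3 1 1 1 0 0 (\<alpha>*\<beta>' - \<alpha>'*\<beta>) \<in> G"
    using is_subgroup3_commutator[OF G(1) u u'] by (simp add: upper3_commutator)
  then have "cmod a0 = cmod a2"
    using diag_ratio_02_ge_1[OF G _ _ A] diag_ratio_02_ge_1[OF G _ _ A'] nc
    by (intro norm_eq_of_ratios_ge_1) auto
  moreover have "cmod a1 = cmod a2 \<or> cmod a0 = cmod a1"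
  proof (cases "\<beta> = 0")
    case True
    then have "upper3 1 1 1 \<alpha> 0 \<gamma> \<in> G" "\<alpha> \<noteq> 0" "\<beta>' \<noteq> 0"
      using u nc by auto
    then have "cmod a1 = cmod a2"
      using diag_ratio_12_ge_1[OF G _ _ u' _ A] diag_ratio_12_ge_1[OF G _ _ u' _ A']
      by (intro norm_eq_of_ratios_ge_1) auto
    then show ?thesis ..
  next
    case False
    then have "upper3 1 1 1 0 \<beta> \<gamma> \<in> G" "\<alpha>' \<noteq> 0"
      using u nc \<open>\<alpha> * \<beta> = 0\<close> by auto
    then have "cmod a0 = cmod a1"
      using diag_ratio_01_ge_1[OF G _ \<open>\<beta> \<noteq> 0\<close> u' _ A] diag_ratio_01_ge_1[OF G _ \<open>\<beta> \<noteq> 0\<close> u' _ A']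
      by (intro norm_eq_of_ratios_ge_1) auto
    then show ?thesis ..
  qed
  ultimately have eq: "cmod a1 = cmod a0" "cmod a2 = cmod a0"
    by auto
  have "cmod a0 ^ 3 = cmod (a0 * a1 * a2)"
    by (simp add: norm_mult eq power3_eq_cube)
  then have "cmod a0 ^ 3 = 1 ^ 3"
    by (simp add: det)
  then have "cmod a0 = 1"
    by (rule power_eq_imp_eq_base) simp_all
  then show ?thesis
    by (simp add: eq)
qed

section \<open>The group Gamma_w\<close>

(* The index type 3 is {1, 2, 3 = 0}: the last entry of a vector literal has index 0. *)
lemma vector_3_nth:
  "(vector [a, b, c] :: 'a::zero^3) $ 1 = a" "(vector [a, b, c] :: 'a::zero^3) $ 2 = b"
  "(vector [a, b, c] :: 'a::zero^3) $ 0 = c"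
  using vector_3[of a b c] unfolding three_eq_zero by simp_all

lemma gst_nilpotent: "(gst s t - mat 1) ** (gst s t - mat 1) = 0"
  by (simp add: vec_eq_iff all_3 matrix_mult_nth_3 gst_def vector_3_nth mat_def)

lemma hxy_nilpotent: "(hxy x y - mat 1) ** (hxy x y - mat 1) ** (hxy x y - mat 1) = 0"
  by (simp add: vec_eq_iff all_3 matrix_mult_nth_3 hxy_def vector_3_nth mat_def)

lemma gst_hxy_not_commute:
  assumes "s \<noteq> 0"
  shows "gst s t ** hxy x y \<noteq> hxy x y ** gst s t"
proof
  assume "gst s t ** hxy x y = hxy x y ** gst s t"
  then have "(gst s t ** hxy x y) $ 1 $ 0 = (hxy x y ** gst s t) $ 1 $ 0"
    by simp
  then show False
    using assms by (simp add: matrix_mult_nth_3 gst_def hxy_def vector_3_nth)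
qed

lemma conjugate_of_Gamma_w_unipotent_pair:
  assumes "psl_conjugate K (Gamma_w x y p q r)" and up: "\<forall>g\<in>K. upper_tri g"
  obtains \<alpha> \<beta> \<gamma> \<alpha>' \<beta>' \<gamma>' where "upper3 1 1 1 \<alpha> \<beta> \<gamma> \<in> K" "upper3 1 1 1 \<alpha>' \<beta>' \<gamma>' \<in> K"
    "\<alpha> * \<beta> = 0" "\<alpha> * \<beta>' \<noteq> \<alpha>' * \<beta>"
proof -
  obtain P where "P \<in> SL3" and K: "K = matrix_conj P ` Gamma_w x y p q r"
    using assms(1) unfolding psl_conjugate_def matrix_conj_def by blast
  then have P: "invertible P"
    by (simp add: SL3_def invertible_det_nz)
  define V H where "V = matrix_conj P (gst 1 0)" and "H = matrix_conj P (hxy x y)"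
  have "gst 1 0 \<in> Gamma_w x y p q r" "hxy x y \<in> Gamma_w x y p q r"
    unfolding Gamma_w_def by (simp_all add: subsetD[OF psl_gen_superset])
  then have "V \<in> K" "H \<in> K"
    unfolding K V_def H_def by simp_all
  have "(V - mat 1) ** (V - mat 1) = matrix_conj P ((gst 1 0 - mat 1) ** (gst 1 0 - mat 1))"
    unfolding V_def by (simp add: P matrix_conj_mult matrix_conj_diff_one)
  then have V_sq: "(V - mat 1) ** (V - mat 1) = 0"
    by (simp add: gst_nilpotent matrix_conj_zero)
  have "(H - mat 1) ** (H - mat 1) ** (H - mat 1) =
      matrix_conj P ((hxy x y - mat 1) ** (hxy x y - mat 1) ** (hxy x y - mat 1))"
    unfolding H_def by (simp add: P matrix_conj_mult matrix_conj_diff_one)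
  then have H_cube: "(H - mat 1) ** (H - mat 1) ** (H - mat 1) = 0"
    by (simp add: hxy_nilpotent matrix_conj_zero)
  obtain \<alpha> \<beta> \<gamma> where V: "V = upper3 1 1 1 \<alpha> \<beta> \<gamma>"
    using upper3_unipotent_of_nilpotent[of V] up \<open>V \<in> K\<close> V_sq by auto
  obtain \<alpha>' \<beta>' \<gamma>' where H: "H = upper3 1 1 1 \<alpha>' \<beta>' \<gamma>'"
    using upper3_unipotent_of_nilpotent[of H] up \<open>H \<in> K\<close> H_cube by auto
  have "\<alpha> * \<beta> = 0"
    using V_sq unfolding V upper3_unipotent_square upper3_zero[symmetric] upper3_eq_iff by simp
  moreover have "V ** H \<noteq> H ** V"
    using gst_hxy_not_commute[of 1 0 x y] injD[OF inj_matrix_conj[OF P]]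
    unfolding V_def H_def matrix_conj_mult[OF P, symmetric] by auto
  then have "\<alpha> * \<beta>' \<noteq> \<alpha>' * \<beta>"
    unfolding V H upper3_unipotent_commute_iff .
  ultimately show thesis
    using that \<open>V \<in> K\<close> \<open>H \<in> K\<close> unfolding V H by blast
qed

theorem mainTheorem6:
  fixes G :: "mat3 set" and x y :: complex and p q r :: int
  assumes "complex_kleinian G"
    and "\<forall>g\<in>G. in_Uplus g"
    and "non_commutative G"
    and "torsion_free G"
    and "coprime p q" and "r \<noteq> 0" and "q ^ 2 dvd r"
    and "psl_conjugate (parabolic_subgroup G) (Gamma_w x y p q r)"
    and "psl_rank (Gamma_w x y p q r) = 3"
  shows "\<forall>g\<in>G. \<not> loxodromic g"
proof
  have "psl_subgroup G" "discrete_set G"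
    using assms(1) unfolding complex_kleinian_def by blast+
  then have G: "is_subgroup3 G" "discrete_set G"
    unfolding psl_subgroup_def by blast+
  have up: "\<forall>g\<in>G. upper_tri g"
    using assms(2) in_Uplus_imp_upper_tri by blast
  have sub: "parabolic_subgroup G \<subseteq> G"
    unfolding parabolic_subgroup_def by (rule psl_gen_least[OF \<open>psl_subgroup G\<close>]) blast
  with up have "\<forall>g\<in>parabolic_subgroup G. upper_tri g"
    by blast
  then obtain \<alpha> \<beta> \<gamma> \<alpha>' \<beta>' \<gamma>' where pu: "upper3 1 1 1 \<alpha> \<beta> \<gamma> \<in> parabolic_subgroup G"
    "upper3 1 1 1 \<alpha>' \<beta>' \<gamma>' \<in> parabolic_subgroup G" and nc: "\<alpha> * \<beta> = 0" "\<alpha> * \<beta>' \<noteq> \<alpha>' * \<beta>"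
    by (rule conjugate_of_Gamma_w_unipotent_pair[OF assms(8)])
  from pu sub have u: "upper3 1 1 1 \<alpha> \<beta> \<gamma> \<in> G" "upper3 1 1 1 \<alpha>' \<beta>' \<gamma>' \<in> G"
    by auto
  fix g assume "g \<in> G"
  then obtain a0 a1 a2 d e f where "g = upper3 a0 a1 a2 d e f"
    using up upper3_of_upper_tri by blast
  then have "\<forall>i. cmod (g $ i $ i) = 1"
    using unipotent_pair_imp_unimodular_diag[OF G u nc] \<open>g \<in> G\<close>
    by (simp add: all_3)
  then show "\<not> loxodromic g"
    using not_loxodromic_if_unimodular_diag up \<open>g \<in> G\<close> by blast
qed

end
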